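(* Suppose $\lim_{|x|\to\infty}\int_{x-a}^{x+a}q(t)\,dt=\infty$ for every $a\in(0,\infty)$. Then $$\lim_{|x|\to\infty}\int_{-\infty}^{\infty}\Big|\frac{\partial}{\partial x}G(x,t)\Big|\,dt=0.$$
   Context: Let $q:\mathbb R\to\mathbb R$ be measurable with $q\in L_1^{\mathrm{loc}}(\mathbb R)$ and $q(x)\ge1$ a.e. A principal fundamental system of solutions (PFSS) of $z''=q(x)z$ is a pair $u,v$ of solutions ($C^1$, derivative locally absolutely continuous, equation a.e.) such that for all $x$: $u>0$, $v>0$, $u'<0$, $v'>0$, $v'u-u'v=1$, $u(x)=v(x)\int_x^\infty v(t)^{-2}dt$, and $u,u'\to0$ as $x\to\infty$, $v,v'\to0$ as $x\to-\infty$, $v,v'\to\infty$ as $x\to\infty$, $u,|u'|\to\infty$ as $x\to-\infty$. Fix a PFSS $\{u,v\}$. The Green function is $G(x,t)=u(x)v(t)$ for $x\ge t$ and $G(x,t)=u(t)v(x)$ for $x\le t$. *)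

theory Defs
  imports "HOL-Analysis.Analysis"
begin

definition potential :: "(real \<Rightarrow> real) \<Rightarrow> bool" where
  "potential q \<longleftrightarrow> q \<in> borel_measurable lborel
     \<and> (\<forall>a b. set_integrable lborel {a..b} q)
     \<and> (AE x in lborel. 1 \<le> q x)"

text \<open>z is a solution of z'' = q z with derivative z': z is C^1 with derivative z',
  and z' is locally absolutely continuous with z'' = q z a.e., expressed as
  z'(x) = z'(0) + integral from 0 to x of q z.\<close>
definition is_solution :: "(real \<Rightarrow> real) \<Rightarrow> (real \<Rightarrow> real) \<Rightarrow> (real \<Rightarrow> real) \<Rightarrow> bool" where
  "is_solution q z z' \<longleftrightarrow>
     (\<forall>x. (z has_real_derivative z' x) (at x)) \<and> continuous_on UNIV z'
     \<and> (\<forall>a b. set_integrable lborel {a..b} (\<lambda>t. q t * z t))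
     \<and> (\<forall>x. z' x = z' 0 + (LBINT t=0..x. q t * z t))"

definition PFSS :: "(real \<Rightarrow> real) \<Rightarrow> (real \<Rightarrow> real) \<Rightarrow> (real \<Rightarrow> real)
     \<Rightarrow> (real \<Rightarrow> real) \<Rightarrow> (real \<Rightarrow> real) \<Rightarrow> bool" where
  "PFSS q u u' v v' \<longleftrightarrow>
     is_solution q u u' \<and> is_solution q v v'
     \<and> (\<forall>x. u x > 0 \<and> v x > 0 \<and> u' x < 0 \<and> v' x > 0)
     \<and> (\<forall>x. v' x * u x - u' x * v x = 1)
     \<and> (\<forall>x. set_integrable lborel {x..} (\<lambda>t. 1 / (v t)\<^sup>2)
            \<and> u x = v x * (LBINT t:{x..}. 1 / (v t)\<^sup>2))
     \<and> (u \<longlongrightarrow> 0) at_top \<and> (u' \<longlongrightarrow> 0) at_top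
     \<and> (v \<longlongrightarrow> 0) at_bot \<and> (v' \<longlongrightarrow> 0) at_bot
     \<and> filterlim v at_top at_top \<and> filterlim v' at_top at_top
     \<and> filterlim u at_top at_bot \<and> filterlim (\<lambda>x. \<bar>u' x\<bar>) at_top at_bot"

definition green :: "(real \<Rightarrow> real) \<Rightarrow> (real \<Rightarrow> real) \<Rightarrow> real \<Rightarrow> real \<Rightarrow> real" where
  "green u v x t = (if t \<le> x then u x * v t else u t * v x)"

end

(*
  For t < x the x-derivative of G(x,t) is u'(x) v(t), for t > x it is u(t) v'(x), so the
  integral equals |u'(x)| \<integral>_{-\<infinity>}^x v + v'(x) \<integral>_x^\<infinity> u.  For a positive decreasing solution z
  of z'' = q z with q \<ge> 1 one has \<integral>_c^\<infinity> z \<le> -z'(c), and the convexity of z together with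
  z'' \<ge> z(x+2a) q on [x+a, x+2a] gives -z'(x+3a) \<le> z(x) / (a^2 K), where K is the mass of q
  on [x+a, x+2a].  Hence \<integral>_x^\<infinity> u \<le> u(x) (3a + 1/(a^2 K)), and by reflection likewise
  \<integral>_{-\<infinity>}^x v \<le> v(x) (3a + 1/(a^2 K)).  The Wronskian v'u - u'v = 1 bounds the whole integral
  by 3a + 1/(a^2 K), which is small once a is small and |x| is so large that K can be
  taken large.
*)
theory Submission
  imports Defs
begin

lemma potentialD:
  assumes "potential q"
  shows "AE t in lborel. 1 \<le> q t" "set_integrable lborel {a..b} q"
  using assms unfolding potential_def by auto

lemma is_solutionD:
  assumes "is_solution q z z'"
  shows "(z has_real_derivative z' x) (at x)" "continuous_on UNIV z"
    "z \<in> borel_measurable borel" "set_integrable lborel {a..b} (\<lambda>t. q t * z t)"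
proof -
  show deriv: "(z has_real_derivative z' x) (at x)" for x
    using assms unfolding is_solution_def by blast
  show cont: "continuous_on UNIV z"
    by (intro continuous_at_imp_continuous_on ballI DERIV_isCont[OF deriv])
  then show "z \<in> borel_measurable borel"
    by (rule borel_measurable_continuous_onI)
  show "set_integrable lborel {a..b} (\<lambda>t. q t * z t)"
    using assms unfolding is_solution_def by blast
qed

lemma PFSSD:
  assumes "PFSS q u u' v v'"
  shows "is_solution q u u'" "is_solution q v v'"
    "0 < u x" "0 < v x" "u' x < 0" "0 < v' x"
    "v' x * u x - u' x * v x = 1"
  using assms unfolding PFSS_def by blast+

lemma is_solution_deriv_diff:
  assumes "is_solution q z z'" "s \<le> t"
  shows "z' t - z' s = (LBINT r:{s..t}. q r * z r)"
proof -
  have int: "set_integrable lborel {a..b} (\<lambda>r. q r * z r)" for a b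
    using is_solutionD(4)[OF assms(1)] .
  have z': "z' x = z' 0 + (LBINT r=0..x. q r * z r)" for x
    using assms(1) unfolding is_solution_def by blast
  have "interval_lebesgue_integrable lborel (min 0 (min (ereal s) (ereal t)))
      (max 0 (max (ereal s) (ereal t))) (\<lambda>r. q r * z r)"
    unfolding interval_lebesgue_integrable_def zero_ereal_def
    by (auto intro!: set_integrable_subset[OF int[of "min 0 (min s t)" "max 0 (max s t)"]]
        simp: einterval_iff min_def max_def)
  then have "(LBINT r=0..ereal s. q r * z r) + (LBINT r=ereal s..ereal t. q r * z r)
      = (LBINT r=0..ereal t. q r * z r)"
    by (rule interval_integral_sum)
  then have "z' t - z' s = (LBINT r=ereal s..ereal t. q r * z r)"
    using z'[of s] z'[of t] by (simp add: zero_ereal_def)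
  then show ?thesis
    using interval_integral_Icc[OF assms(2)] by simp
qed

lemma set_integral_le_solution_deriv_diff:
  assumes "potential q" "is_solution q z z'" "\<And>r. 0 \<le> z r" "s \<le> t"
  shows "(LBINT r:{s..t}. z r) \<le> z' t - z' s"
  unfolding is_solution_deriv_diff[OF assms(2,4)]
proof (rule set_integral_mono_AE)
  show "set_integrable lborel {s..t} z"
    using is_solutionD(2)[OF assms(2)]
    by (intro borel_integrable_atLeastAtMost') (auto intro: continuous_on_subset)
  show "set_integrable lborel {s..t} (\<lambda>r. q r * z r)"
    by (rule is_solutionD(4)[OF assms(2)])
  show "AE r\<in>{s..t} in lborel. z r \<le> q r * z r"
    using potentialD(1)[OF assms(1)]
    by eventually_elim (use assms(3) mult_right_mono[of 1 _ "z _"] in auto)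
qed

lemma mass_le_solution_deriv_diff:
  assumes "potential q" "is_solution q z z'" "s \<le> t" "0 \<le> c" "\<And>r. r \<in> {s..t} \<Longrightarrow> c \<le> z r"
  shows "c * (LBINT r:{s..t}. q r) \<le> z' t - z' s"
proof -
  have "c * (LBINT r:{s..t}. q r) = (LBINT r:{s..t}. c * q r)"
    by (simp add: set_integral_mult_right)
  also have "\<dots> \<le> (LBINT r:{s..t}. q r * z r)"
  proof (rule set_integral_mono_AE)
    show "set_integrable lborel {s..t} (\<lambda>r. c * q r)"
      using potentialD(2)[OF assms(1)] by simp
    show "set_integrable lborel {s..t} (\<lambda>r. q r * z r)"
      by (rule is_solutionD(4)[OF assms(2)])
    show "AE r\<in>{s..t} in lborel. c * q r \<le> q r * z r"
      using potentialD(1)[OF assms(1)]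
      by eventually_elim (use assms(4,5) in \<open>auto simp: mult.commute intro: mult_left_mono\<close>)
  qed
  finally show ?thesis
    using is_solution_deriv_diff[OF assms(2,3)] by simp
qed

lemma is_solution_deriv_mono:
  assumes "potential q" "is_solution q z z'" "\<And>r. 0 \<le> z r" "s \<le> t"
  shows "z' s \<le> z' t"
  using mass_le_solution_deriv_diff[OF assms(1,2,4), of 0] assms(3) by simp

text \<open>The principal solution u is a decaying solution, and the increasing solution v becomes one
  after the reflection x \<mapsto> -x; so both halves of the Green function obey the same estimates.\<close>

locale decaying_solution =
  fixes q z z' :: "real \<Rightarrow> real"
  assumes potential: "potential q"
    and solution: "is_solution q z z'"
    and pos: "\<And>x. 0 < z x"
    and deriv_neg: "\<And>x. z' x < 0"
begin

lemma decreasing: "s \<le> t \<Longrightarrow> z t \<le> z s"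
  using DERIV_nonpos_imp_nonincreasing[of s t z] is_solutionD(1)[OF solution] deriv_neg
  by (meson less_imp_le)

lemma deriv_mono: "s \<le> t \<Longrightarrow> z' s \<le> z' t"
  using is_solution_deriv_mono[OF potential solution] pos less_imp_le by blast

lemma mass_le_deriv: "s \<le> t \<Longrightarrow> z t * (LBINT r:{s..t}. q r) \<le> - z' s"
  using mass_le_solution_deriv_diff[OF potential solution, of s t "z t"]
    decreasing pos[of t] deriv_neg[of t] by (auto intro: less_imp_le)

lemma deriv_le_value:
  assumes "0 < a"
  shows "a * - z' (x + a) \<le> z x"
proof -
  obtain \<xi> where \<xi>: "x < \<xi>" "\<xi> < x + a" "z (x + a) - z x = (x + a - x) * z' \<xi>"
    using MVT2[of x "x + a" z z'] is_solutionD(1)[OF solution] assms by auto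
  have "a * - z' (x + a) \<le> a * - z' \<xi>"
    using deriv_mono[of \<xi> "x + a"] \<xi> assms by simp
  also have "\<dots> = z x - z (x + a)"
    using \<xi>(3) by simp
  also have "\<dots> \<le> z x"
    using pos[of "x + a"] by simp
  finally show ?thesis .
qed

lemma tail_nn_integral_le:
  "(\<integral>\<^sup>+ t. ennreal (z t) * indicator {c..} t \<partial>lborel) \<le> ennreal (- z' c)"
proof -
  have [measurable]: "z \<in> borel_measurable borel"
    by (rule is_solutionD(3)[OF solution])
  define f where "f n t = ennreal (z t) * indicator {c..c + real n} t" for n t
  have "(\<lambda>n. integral\<^sup>N lborel (f n)) \<longlonglongrightarrow> (\<integral>\<^sup>+ t. ennreal (z t) * indicator {c..} t \<partial>lborel)"
  proof (rule nn_integral_LIMSEQ)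
    show "incseq f"
      unfolding f_def incseq_def le_fun_def by (auto intro!: mult_left_mono simp: indicator_def)
    show "f n \<in> borel_measurable lborel" for n
      unfolding f_def by measurable
    show "(\<lambda>n. f n t) \<longlonglongrightarrow> ennreal (z t) * indicator {c..} t" for t
    proof (rule tendsto_eventually)
      obtain N :: nat where "t - c \<le> real N"
        using real_arch_simple by blast
      then show "\<forall>\<^sub>F n in sequentially. f n t = ennreal (z t) * indicator {c..} t"
        unfolding eventually_sequentially f_def by (intro exI[of _ N]) (auto simp: indicator_def)
    qed
  qed
  moreover have "integral\<^sup>N lborel (f n) \<le> ennreal (- z' c)" for n
  proof -
    have "set_integrable lborel {c..c + real n} z"
      using is_solutionD(2)[OF solution]
      by (intro borel_integrable_atLeastAtMost') (auto intro: continuous_on_subset)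
    then have "integral\<^sup>N lborel (f n) = ennreal (LBINT r:{c..c + real n}. z r)"
      unfolding f_def set_lebesgue_integral_def set_integrable_def
      by (subst nn_integral_eq_integral[symmetric])
         (auto intro!: nn_integral_cong less_imp_le[OF pos] split: split_indicator)
    also have "\<dots> \<le> ennreal (z' (c + real n) - z' c)"
      by (intro ennreal_leI set_integral_le_solution_deriv_diff[OF potential solution])
         (auto intro: less_imp_le pos)
    also have "\<dots> \<le> ennreal (- z' c)"
      using deriv_neg[of "c + real n"] by (intro ennreal_leI) simp
    finally show ?thesis .
  qed
  ultimately show ?thesis
    using LIMSEQ_le_const2 by blast
qed

lemma far_deriv_le:
  assumes "0 < a" "0 \<le> K" "K \<le> (LBINT r:{x + a..x + 2 * a}. q r)"
  shows "a\<^sup>2 * K * - z' (x + 3 * a) \<le> z x"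
proof -
  have "a\<^sup>2 * K * - z' (x + 3 * a) = a * K * (a * - z' (x + 2 * a + a))"
    by (simp add: power2_eq_square algebra_simps)
  also have "\<dots> \<le> a * K * z (x + 2 * a)"
    using deriv_le_value[OF assms(1), of "x + 2 * a"] assms(1,2) by (intro mult_left_mono) auto
  also have "\<dots> \<le> a * (z (x + 2 * a) * (LBINT r:{x + a..x + 2 * a}. q r))"
    using assms pos[of "x + 2 * a"] by (simp add: mult_left_mono)
  also have "\<dots> \<le> a * - z' (x + a)"
    using mult_left_mono[OF mass_le_deriv[of "x + a" "x + 2 * a"], of a] assms(1) by simp
  also have "\<dots> \<le> z x"
    by (rule deriv_le_value[OF assms(1)])
  finally show ?thesis .
qed

lemma tail_nn_integral_le_value:
  assumes "0 < a" "0 < K" "K \<le> (LBINT r:{x + a..x + 2 * a}. q r)"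
  shows "(\<integral>\<^sup>+ t. ennreal (z t) * indicator {x..} t \<partial>lborel)
    \<le> ennreal (z x * (3 * a + 1 / (a\<^sup>2 * K)))"
proof -
  have "(\<integral>\<^sup>+ t. ennreal (z t) * indicator {x..} t \<partial>lborel) \<le>
     (\<integral>\<^sup>+ t. ennreal (z x) * indicator {x..x + 3 * a} t
        + ennreal (z t) * indicator {x + 3 * a..} t \<partial>lborel)"
    by (rule nn_integral_mono) (auto simp: indicator_def intro!: ennreal_leI decreasing)
  also have "\<dots> = ennreal (z x) * ennreal (3 * a)
      + (\<integral>\<^sup>+ t. ennreal (z t) * indicator {x + 3 * a..} t \<partial>lborel)"
    using is_solutionD(3)[OF solution] assms(1) by (simp add: nn_integral_add nn_integral_cmult_indicator)
  also have "\<dots> \<le> ennreal (z x * (3 * a)) + ennreal (- z' (x + 3 * a))"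
    using tail_nn_integral_le pos[of x] assms(1) by (intro add_mono) (auto simp: ennreal_mult)
  also have "\<dots> \<le> ennreal (z x * (3 * a) + z x / (a\<^sup>2 * K))"
  proof -
    have "- z' (x + 3 * a) \<le> z x / (a\<^sup>2 * K)"
      using far_deriv_le[OF assms(1) less_imp_le[OF assms(2)] assms(3)] assms(1,2)
      by (simp add: pos_le_divide_eq mult.commute)
    moreover have "0 \<le> z x * (3 * a)" "0 \<le> z x / (a\<^sup>2 * K)"
      using pos[of x] assms(1,2) by simp_all
    ultimately show ?thesis
      by (simp add: add_left_mono ennreal_leI)
  qed
  finally show ?thesis
    by (simp add: distrib_left)
qed

end

lemma set_integrable_reflect:
  fixes f :: "real \<Rightarrow> real"
  assumes "set_integrable lborel {- b..- a} f"
  shows "set_integrable lborel {a..b} (\<lambda>x. f (- x))"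
proof -
  have "integrable lborel (\<lambda>x. indicator {- b..- a} (0 + - 1 * x) *\<^sub>R f (0 + - 1 * x))"
    using assms unfolding set_integrable_def by (intro lborel_integrable_real_affine) auto
  moreover have "indicator {- b..- a} (- x) = (indicator {a..b} x :: real)" for x
    by (auto split: split_indicator)
  ultimately show ?thesis
    unfolding set_integrable_def by simp
qed

lemma potential_reflect:
  assumes "potential q"
  shows "potential (\<lambda>x. q (- x))"
proof -
  have [measurable]: "q \<in> borel_measurable borel"
    using assms unfolding potential_def by simp
  have "AE x in lborel. 1 \<le> q (0 + - 1 * x)"
    by (rule AE_borel_affine) (use potentialD(1)[OF assms] in auto)
  then show ?thesis
    using set_integrable_reflect[OF potentialD(2)[OF assms]] unfolding potential_def by simp
qed

lemma is_solution_reflect: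
  assumes "is_solution q z z'"
  shows "is_solution (\<lambda>x. q (- x)) (\<lambda>x. z (- x)) (\<lambda>x. - z' (- x))"
  unfolding is_solution_def
proof (intro conjI allI)
  show "((\<lambda>x. z (- x)) has_real_derivative - z' (- x)) (at x)" for x
    by (rule DERIV_mirror[THEN iffD1]) (rule is_solutionD(1)[OF assms])
  have "continuous_on UNIV z'"
    using assms unfolding is_solution_def by blast
  then have "continuous_on UNIV (\<lambda>x. z' (- x))"
    by (rule continuous_on_compose2[OF _ continuous_on_minus[OF continuous_on_id]]) auto
  then show "continuous_on UNIV (\<lambda>x. - z' (- x))"
    by (rule continuous_on_minus)
  show "set_integrable lborel {a..b} (\<lambda>t. q (- t) * z (- t))" for a b
    by (rule set_integrable_reflect[OF is_solutionD(4)[OF assms]])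
  show "- z' (- x) = - z' (- 0) + (LBINT t=0..x. q (- t) * z (- t))" for x
  proof -
    have "(LBINT t=0..x. q (- t) * z (- t)) = - (LBINT t=0..- x. q t * z t)"
      by (subst interval_integral_reflect, subst interval_integral_endpoints_reverse)
         (simp add: zero_ereal_def)
    moreover have "z' (- x) = z' 0 + (LBINT t=0..- x. q t * z t)"
      using assms unfolding is_solution_def by blast
    ultimately show ?thesis
      by simp
  qed
qed

lemma nn_integral_reflect:
  fixes f :: "real \<Rightarrow> ennreal"
  assumes "f \<in> borel_measurable borel"
  shows "(\<integral>\<^sup>+ x. f (- x) \<partial>lborel) = (\<integral>\<^sup>+ x. f x \<partial>lborel)"
  using nn_integral_real_affine[OF assms, of "- 1" 0] by simp

lemma PFSS_decaying_solutions:
  assumes "potential q" "PFSS q u u' v v'"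
  shows "decaying_solution q u u'"
    and "decaying_solution (\<lambda>x. q (- x)) (\<lambda>x. v (- x)) (\<lambda>x. - v' (- x))"
  using assms potential_reflect is_solution_reflect PFSSD[OF assms(2)]
  unfolding decaying_solution_def by auto

lemma PFSS_left_tail_nn_integral_le:
  assumes "potential q" "PFSS q u u' v v'"
    and "0 < a" "0 < K" "K \<le> (LBINT r:{x - 2 * a..x - a}. q r)"
  shows "(\<integral>\<^sup>+ t. ennreal (v t) * indicator {..x} t \<partial>lborel)
    \<le> ennreal (v x * (3 * a + 1 / (a\<^sup>2 * K)))"
proof -
  interpret w: decaying_solution "\<lambda>x. q (- x)" "\<lambda>x. v (- x)" "\<lambda>x. - v' (- x)"
    by (rule PFSS_decaying_solutions(2)[OF assms(1,2)])
  have [measurable]: "v \<in> borel_measurable borel"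
    by (rule is_solutionD(3)[OF PFSSD(2)[OF assms(2)]])
  have "(LBINT r:{x - 2 * a..x - a}. q r) = (LBINT r:{- x + a..- x + 2 * a}. q (- r))"
    by (subst set_integral_reflect) (auto intro!: arg_cong2[where f="set_lebesgue_integral lborel"])
  then have "(\<integral>\<^sup>+ t. ennreal (v (- t)) * indicator {- x..} t \<partial>lborel)
      \<le> ennreal (v x * (3 * a + 1 / (a\<^sup>2 * K)))"
    using w.tail_nn_integral_le_value[OF assms(3,4), of "- x"] assms(5) by simp
  moreover have "(\<integral>\<^sup>+ t. ennreal (v (- t)) * indicator {- x..} t \<partial>lborel)
      = (\<integral>\<^sup>+ t. ennreal (v t) * indicator {..x} t \<partial>lborel)"
    by (subst nn_integral_reflect[symmetric]) (auto intro!: nn_integral_cong split: split_indicator)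
  ultimately show ?thesis
    by simp
qed

lemma deriv_green:
  assumes "\<And>y. (u has_real_derivative u' y) (at y)" "\<And>y. (v has_real_derivative v' y) (at y)"
    and "t \<noteq> x"
  shows "deriv (\<lambda>y. green u v y t) x = (if t < x then u' x * v t else u t * v' x)"
proof (cases "t < x")
  case True
  have "((\<lambda>y. u y * v t) has_real_derivative u' x * v t) (at x)"
    using assms(1) by (auto intro!: derivative_eq_intros)
  then have "((\<lambda>y. green u v y t) has_real_derivative u' x * v t) (at x)"
    by (rule has_field_derivative_transform_within_open[where S="{t<..}"])
       (use True in \<open>auto simp: green_def\<close>)
  then show ?thesis
    using True by (simp add: DERIV_imp_deriv)
next
  case False
  then have "x < t"
    using assms(3) by simp
  have "((\<lambda>y. u t * v y) has_real_derivative u t * v' x) (at x)"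
    using assms(2) by (auto intro!: derivative_eq_intros)
  then have "((\<lambda>y. green u v y t) has_real_derivative u t * v' x) (at x)"
    by (rule has_field_derivative_transform_within_open[where S="{..<t}"])
       (use \<open>x < t\<close> in \<open>auto simp: green_def\<close>)
  then show ?thesis
    using False by (simp add: DERIV_imp_deriv)
qed

lemma nn_integral_abs_deriv_green:
  assumes "PFSS q u u' v v'"
  shows "(\<integral>\<^sup>+ t. ennreal \<bar>deriv (\<lambda>y. green u v y t) x\<bar> \<partial>lborel) =
    ennreal (- u' x) * (\<integral>\<^sup>+ t. ennreal (v t) * indicator {..x} t \<partial>lborel) +
    ennreal (v' x) * (\<integral>\<^sup>+ t. ennreal (u t) * indicator {x..} t \<partial>lborel)"
proof -
  note u = is_solutionD[OF PFSSD(1)[OF assms]] and v = is_solutionD[OF PFSSD(2)[OF assms]]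
  have [measurable]: "u \<in> borel_measurable borel" "v \<in> borel_measurable borel"
    using u(3) v(3) .
  have "(\<integral>\<^sup>+ t. ennreal \<bar>deriv (\<lambda>y. green u v y t) x\<bar> \<partial>lborel) =
     (\<integral>\<^sup>+ t. ennreal (- u' x) * (ennreal (v t) * indicator {..x} t) +
        ennreal (v' x) * (ennreal (u t) * indicator {x..} t) \<partial>lborel)"
    using AE_lborel_singleton[of x]
  proof (rule nn_integral_cong_AE[OF eventually_mono])
    fix t assume "t \<noteq> x"
    then show "ennreal \<bar>deriv (\<lambda>y. green u v y t) x\<bar> =
        ennreal (- u' x) * (ennreal (v t) * indicator {..x} t) +
        ennreal (v' x) * (ennreal (u t) * indicator {x..} t)"
      using deriv_green[OF u(1) v(1) \<open>t \<noteq> x\<close>] PFSSD(3-6)[OF assms, of t] PFSSD(3-6)[OF assms, of x]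
      by (cases "t < x") (auto simp: abs_mult ennreal_mult[symmetric] mult.commute indicator_def)
  qed
  also have "\<dots> = ennreal (- u' x) * (\<integral>\<^sup>+ t. ennreal (v t) * indicator {..x} t \<partial>lborel) +
    ennreal (v' x) * (\<integral>\<^sup>+ t. ennreal (u t) * indicator {x..} t \<partial>lborel)"
    by (simp add: nn_integral_add nn_integral_cmult)
  finally show ?thesis .
qed

lemma nn_integral_abs_deriv_green_le:
  assumes "potential q" "PFSS q u u' v v'" "0 < a" "0 < K"
    and "K \<le> (LBINT r:{x + a..x + 2 * a}. q r)" "K \<le> (LBINT r:{x - 2 * a..x - a}. q r)"
  shows "(\<integral>\<^sup>+ t. ennreal \<bar>deriv (\<lambda>y. green u v y t) x\<bar> \<partial>lborel)
    \<le> ennreal (3 * a + 1 / (a\<^sup>2 * K))"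
proof -
  define C where "C = 3 * a + 1 / (a\<^sup>2 * K)"
  interpret u: decaying_solution q u u'
    by (rule PFSS_decaying_solutions(1)[OF assms(1,2)])
  have pos: "0 \<le> - u' x" "0 \<le> v x" "0 \<le> v' x" "0 \<le> u x" "0 \<le> C"
    using PFSSD(3-6)[OF assms(2), of x] assms(3,4) unfolding C_def by (auto intro: less_imp_le)
  have "(\<integral>\<^sup>+ t. ennreal \<bar>deriv (\<lambda>y. green u v y t) x\<bar> \<partial>lborel) \<le>
      ennreal (- u' x) * ennreal (v x * C) + ennreal (v' x) * ennreal (u x * C)"
    unfolding nn_integral_abs_deriv_green[OF assms(2)] C_def
    by (intro add_mono mult_left_mono PFSS_left_tail_nn_integral_le[OF assms(1-4,6)]
        u.tail_nn_integral_le_value[OF assms(3-5)]) auto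
  also have "\<dots> = ennreal (- u' x * (v x * C) + v' x * (u x * C))"
    using pos by (simp only: ennreal_mult[symmetric] ennreal_plus[symmetric] mult_nonneg_nonneg)
  also have "\<dots> = ennreal ((v' x * u x - u' x * v x) * C)"
    by (simp add: algebra_simps)
  also have "\<dots> = ennreal C"
    using PFSSD(7)[OF assms(2)] by simp
  finally show ?thesis
    unfolding C_def .
qed

lemma eventually_at_infinity_shift:
  fixes c :: real
  assumes "eventually P at_infinity"
  shows "eventually (\<lambda>x. P (x + c)) at_infinity"
proof -
  have "filterlim (\<lambda>x. x + c) at_infinity at_infinity"
    by (rule tendsto_add_filterlim_at_infinity'[OF filterlim_ident tendsto_const])
  then show ?thesis
    using assms by (rule filterlim_iff[THEN iffD1, rule_format])
qed

lemma eventually_mass_ge: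
  fixes q :: "real \<Rightarrow> real"
  assumes "\<forall>a>0. filterlim (\<lambda>x. LBINT t=ereal (x - a)..ereal (x + a). q t) at_top at_infinity"
    and "b < c"
  shows "\<forall>\<^sub>F x in at_infinity. K \<le> (LBINT t:{x + b..x + c}. q t)"
proof -
  define r where "r = (c - b) / 2"
  have "\<forall>\<^sub>F y in at_infinity. K \<le> (LBINT t=ereal (y - r)..ereal (y + r). q t)"
    using assms unfolding r_def filterlim_at_top by simp
  then have "\<forall>\<^sub>F x in at_infinity.
      K \<le> (LBINT t=ereal (x + (b + c) / 2 - r)..ereal (x + (b + c) / 2 + r). q t)"
    by (rule eventually_at_infinity_shift)
  moreover have "x + (b + c) / 2 - r = x + b" "x + (b + c) / 2 + r = x + c" for x
    unfolding r_def by (simp_all add: field_simps)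
  ultimately show ?thesis
    using assms(2) by (simp add: interval_integral_Icc)
qed

theorem lemma4p2:
  fixes q u u' v v' :: "real \<Rightarrow> real"
  assumes "potential q"
    and "PFSS q u u' v v'"
    and "\<forall>a::real>0. filterlim (\<lambda>x. LBINT t=ereal (x-a)..ereal (x+a). q t) at_top at_infinity"
  shows "((\<lambda>x. \<integral>\<^sup>+ t. ennreal \<bar>deriv (\<lambda>y. green u v y t) x\<bar> \<partial>lborel) \<longlongrightarrow> 0) at_infinity"
proof (rule tendsto_zero_ennreal)
  fix \<epsilon> :: real
  assume "0 < \<epsilon>"
  define a where "a = \<epsilon> / 6"
  define K where "K = 4 / (a\<^sup>2 * \<epsilon>)"
  have "0 < a" "0 < K"
    using \<open>0 < \<epsilon>\<close> unfolding a_def K_def by simp_all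
  have small: "3 * a + 1 / (a\<^sup>2 * K) < \<epsilon>"
    using \<open>0 < \<epsilon>\<close> unfolding K_def a_def by (simp add: field_simps)
  have "\<forall>\<^sub>F x in at_infinity. K \<le> (LBINT r:{x + a..x + 2 * a}. q r)"
    using eventually_mass_ge[OF assms(3), of a "2 * a"] \<open>0 < a\<close> by simp
  moreover have "\<forall>\<^sub>F x in at_infinity. K \<le> (LBINT r:{x - 2 * a..x - a}. q r)"
    using eventually_mass_ge[OF assms(3), of "- (2 * a)" "- a"] \<open>0 < a\<close> by simp
  ultimately show "\<forall>\<^sub>F x in at_infinity.
      (\<integral>\<^sup>+ t. ennreal \<bar>deriv (\<lambda>y. green u v y t) x\<bar> \<partial>lborel) < ennreal \<epsilon>"
  proof eventually_elim
    case (elim x)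
    have "(\<integral>\<^sup>+ t. ennreal \<bar>deriv (\<lambda>y. green u v y t) x\<bar> \<partial>lborel)
        \<le> ennreal (3 * a + 1 / (a\<^sup>2 * K))"
      by (rule nn_integral_abs_deriv_green_le[OF assms(1,2) \<open>0 < a\<close> \<open>0 < K\<close> elim])
    also have "\<dots> < ennreal \<epsilon>"
      using small \<open>0 < \<epsilon>\<close> by (simp add: ennreal_lessI)
    finally show ?case .
  qed
qed

end
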